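(* Let $\mathcal P=(P_1,\dots,P_k)$ be a hinge in $V=\mathbb C^n$ and fix $m\in\{0,1,\dots,n\}$. Consider the operators $\lambda^m(P_1),\dots,\lambda^m(P_k):\Lambda^mV\to\Lambda^mV$. Then exactly one of the following holds: (1) there is a unique $j$ with $\lambda^m(P_j)\neq0$; (2) there is $j$ such that $\lambda^m(P_j)\neq0$, $\lambda^m(P_{j+1})\ne0$ and $\lambda^m(P_t)=0$ for all $t\ne j,j+1$; in this case $\lambda^m(P_j)$ and $\lambda^m(P_{j+1})$ have rank $1$, coincide up to a nonzero factor, and also coincide (up to a nonzero factor) with $\lambda^m(Q_j)$, where $Q_j=\mathrm{Ker}\,P_j\oplus\mathrm{Im}\,P_j$.
   Context: A linear relation is a subspace $P\subset V\oplus V$. $\mathrm{Ker}\,P=\{v: v\oplus0\in P\}$, $\mathrm{Dom}\,P$ and $\mathrm{Im}\,P$ are the projections of $P$ to the first and second summands, $\mathrm{Indef}\,P=\{w:0\oplus w\in P\}$, $\mathrm{rk}\,P=\dim\mathrm{Dom}\,P-\dim\mathrm{Ker}\,P$. If $\dim P=n$, there exist bases $f_1,\dots,f_a,g_1,\dots,g_b,h_1,\dots,h_c$ and $F_1,\dots,F_a,G_1,\dots,G_b,H_1,\dots,H_c$ of $V$ such that $P$ is spanned by $0\oplus F_i$, $g_j\oplus G_j$, $h_k\oplus0$; $\lambda(P):\Lambda V\to\Lambda V$ sends $f_1\wedge\dots\wedge f_a\wedge g_{i_1}\wedge\dots\wedge g_{i_s}$ ($i_1<\dots<i_s$) to $F_1\wedge\dots\wedge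 F_a\wedge G_{i_1}\wedge\dots\wedge G_{i_s}$ and annihilates the other wedge monomials in the basis $f,g,h$; it is defined up to a nonzero scalar, and $\lambda^m(P)$ is its restriction to $\Lambda^mV$. A hinge is a sequence $(P_1,\dots,P_k)$ of $n$-dimensional linear relations such that $\mathrm{Ker}\,P_j=\mathrm{Dom}\,P_{j+1}$ and $\mathrm{Im}\,P_j=\mathrm{Indef}\,P_{j+1}$ for $1\le j\le k-1$, $\mathrm{Dom}\,P_1=V$, $\mathrm{Im}\,P_k=V$, and $\mathrm{rk}\,P_j>0$ for all $j$. *)

theory Defs
  imports "HOL-Analysis.Analysis" "HOL-Library.Function_Algebras"
begin

text \<open>Complex vector spaces are modelled as function spaces 'a => complex with
pointwise operations. V = C^n is 'n => complex with n = CARD('n);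
V (+) V is ('n + 'n) => complex; the exterior power Lambda^m V is modelled
inside 'n list => complex (wedge monomials = families of m x m minors).\<close>

definition fscale :: "complex \<Rightarrow> ('a \<Rightarrow> complex) \<Rightarrow> ('a \<Rightarrow> complex)" where
  "fscale c v = (\<lambda>i. c * v i)"

definition cspan :: "('a \<Rightarrow> complex) set \<Rightarrow> ('a \<Rightarrow> complex) set" where
  "cspan S = module.span fscale S"

definition csubspace :: "('a \<Rightarrow> complex) set \<Rightarrow> bool" where
  "csubspace S = module.subspace fscale S"

definition cindependent :: "('a \<Rightarrow> complex) set \<Rightarrow> bool" where
  "cindependent S = (\<not> module.dependent fscale S)"

definition cdim :: "('a \<Rightarrow> complex) set \<Rightarrow> nat" where
  "cdim S = vector_space.dim fscale S"

definition cbasis :: "nat \<Rightarrow> (nat \<Rightarrow> ('a \<Rightarrow> complex)) \<Rightarrow> bool" where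
  "cbasis n e \<longleftrightarrow> inj_on e {..<n} \<and> cindependent (e ` {..<n}) \<and> cspan (e ` {..<n}) = UNIV"

definition dsum :: "('n \<Rightarrow> complex) \<Rightarrow> ('n \<Rightarrow> complex) \<Rightarrow> ('n + 'n \<Rightarrow> complex)" where
  "dsum v w = (\<lambda>x. case x of Inl i \<Rightarrow> v i | Inr i \<Rightarrow> w i)"

definition linrel :: "('n + 'n \<Rightarrow> complex) set \<Rightarrow> bool" where
  "linrel P \<longleftrightarrow> csubspace P"

definition Ker :: "('n + 'n \<Rightarrow> complex) set \<Rightarrow> ('n \<Rightarrow> complex) set" where
  "Ker P = {v. dsum v 0 \<in> P}"

definition Dom :: "('n + 'n \<Rightarrow> complex) set \<Rightarrow> ('n \<Rightarrow> complex) set" where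
  "Dom P = {v. \<exists>w. dsum v w \<in> P}"

definition Im :: "('n + 'n \<Rightarrow> complex) set \<Rightarrow> ('n \<Rightarrow> complex) set" where
  "Im P = {w. \<exists>v. dsum v w \<in> P}"

definition Indef :: "('n + 'n \<Rightarrow> complex) set \<Rightarrow> ('n \<Rightarrow> complex) set" where
  "Indef P = {w. dsum 0 w \<in> P}"

definition rk :: "('n + 'n \<Rightarrow> complex) set \<Rightarrow> nat" where
  "rk P = cdim (Dom P) - cdim (Ker P)"

text \<open>Wedge product vs 0 /\ ... /\ vs (m-1), represented by its coordinates:
at a list of indices is of length m, the minor det [vs i (is ! j)]_{i,j<m}.\<close>
definition wedge :: "nat \<Rightarrow> (nat \<Rightarrow> ('n \<Rightarrow> complex)) \<Rightarrow> ('n list \<Rightarrow> complex)" where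
  "wedge m vs = (\<lambda>is. if length is = m then
      (\<Sum>\<sigma>\<in>{\<sigma>. \<sigma> permutes {..<m}}. of_int (sign \<sigma>) * (\<Prod>i<m. vs i (is ! \<sigma> i)))
     else 0)"

definition ext :: "nat \<Rightarrow> ('n list \<Rightarrow> complex) set" where
  "ext m = cspan {wedge m vs | vs. True}"

definition mono :: "(nat \<Rightarrow> ('n \<Rightarrow> complex)) \<Rightarrow> nat set \<Rightarrow> ('n list \<Rightarrow> complex)" where
  "mono e S = wedge (card S) (\<lambda>i. e (sorted_list_of_set S ! i))"

definition lin_on :: "('a \<Rightarrow> complex) set \<Rightarrow> (('a \<Rightarrow> complex) \<Rightarrow> ('b \<Rightarrow> complex)) \<Rightarrow> bool" where
  "lin_on S L \<longleftrightarrow> (\<forall>x\<in>S. \<forall>y\<in>S. L (x + y) = L x + L y) \<and>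
                   (\<forall>c. \<forall>x\<in>S. L (fscale c x) = fscale c (L x))"

text \<open>L is (a choice of) lambda^m(P): there are bases f_1..f_a, g_1..g_b, h_1..h_c
(= e 0..e(a-1), e a..e(a+b-1), e(a+b)..e(n-1)) and F, G, H (= E at the same indices)
of V with P = span of 0(+)F_i, g_j(+)G_j, h_k(+)0, and L is the linear operator
on Lambda^m V sending f_1/\../\f_a/\g_{i_1}/\../\g_{i_s} to F_1/\../\F_a/\G_{i_1}/\../\G_{i_s}
and killing all other wedge monomials of degree m in the basis f, g, h.\<close>
definition lambda_m :: "nat \<Rightarrow> ('n::finite + 'n \<Rightarrow> complex) set \<Rightarrow>
    (('n list \<Rightarrow> complex) \<Rightarrow> ('n list \<Rightarrow> complex)) \<Rightarrow> bool" where
  "lambda_m m P L \<longleftrightarrow> (\<exists>e E a b. a + b \<le> CARD('n) \<and> cbasis CARD('n) e \<and> cbasis CARD('n) E \<and>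
     P = cspan ({dsum 0 (E i) | i. i < a} \<union> {dsum (e i) (E i) | i. a \<le> i \<and> i < a + b}
                \<union> {dsum (e i) 0 | i. a + b \<le> i \<and> i < CARD('n)}) \<and>
     lin_on (ext m) L \<and>
     (\<forall>S. S \<subseteq> {..<CARD('n)} \<and> card S = m \<longrightarrow>
        L (mono e S) = (if {..<a} \<subseteq> S \<and> S \<subseteq> {..<a + b} then mono E S else 0)))"

definition hinge :: "(nat \<Rightarrow> ('n::finite + 'n \<Rightarrow> complex) set) \<Rightarrow> nat \<Rightarrow> bool" where
  "hinge Ps k \<longleftrightarrow> k \<ge> 1 \<and>
     (\<forall>j\<in>{1..k}. linrel (Ps j) \<and> cdim (Ps j) = CARD('n) \<and> rk (Ps j) > 0) \<and>
     (\<forall>j. 1 \<le> j \<and> j + 1 \<le> k \<longrightarrow> Ker (Ps j) = Dom (Ps (j + 1)) \<and> Im (Ps j) = Indef (Ps (j + 1))) \<and>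
     Dom (Ps 1) = UNIV \<and> Im (Ps k) = UNIV"

definition KerIm :: "('n + 'n \<Rightarrow> complex) set \<Rightarrow> ('n + 'n \<Rightarrow> complex) set" where
  "KerIm P = {dsum v w | v w. v \<in> Ker P \<and> w \<in> Im P}"

definition op_nonzero :: "nat \<Rightarrow> (('n list \<Rightarrow> complex) \<Rightarrow> ('n list \<Rightarrow> complex)) \<Rightarrow> bool" where
  "op_nonzero m L \<longleftrightarrow> (\<exists>w\<in>ext m. L w \<noteq> 0)"

definition op_rank :: "nat \<Rightarrow> (('n list \<Rightarrow> complex) \<Rightarrow> ('n list \<Rightarrow> complex)) \<Rightarrow> nat" where
  "op_rank m L = cdim (L ` ext m)"

definition op_propto :: "nat \<Rightarrow> (('n list \<Rightarrow> complex) \<Rightarrow> ('n list \<Rightarrow> complex)) \<Rightarrow>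
    (('n list \<Rightarrow> complex) \<Rightarrow> ('n list \<Rightarrow> complex)) \<Rightarrow> bool" where
  "op_propto m L L' \<longleftrightarrow> (\<exists>c. c \<noteq> 0 \<and> (\<forall>w\<in>ext m. L w = fscale c (L' w)))"

end

theory Submission
  imports Defs "Jordan_Normal_Form.Determinant"
begin

text \<open>
  Choose bases adapted to P as in the definition of lambda_m, and put a = dim Indef P and
  a + b = dim Im P, so that b = rk P. Then lambda^m(P) sends the monomial e_S to E_S when
  {0..<a} \<subseteq> S \<subseteq> {0..<a + b} and kills it otherwise; thus lambda^m(P) \<noteq> 0 iff a \<le> m \<le> a + b.
  Along a hinge, Im P_j = Indef P_(j+1) gives a_(j+1) = a_j + b_j, while Dom P_1 = V and
  Im P_k = V give a_1 = 0 and a_k + b_k = n. As every b_j is positive, the intervals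
  [a_j, a_j + b_j] tile [0, n] and meet only in common endpoints, so m lies in exactly one of
  them or is the common endpoint a_(j+1) of two consecutive ones. In the latter case both
  operators kill every monomial except e_0 \<and> ... \<and> e_(m-1) and map onto the line spanned by
  the wedge of a basis of Im P_j = Indef P_(j+1); as Ker P_j = Dom P_(j+1), they vanish on the
  same monomials of either basis and are therefore proportional. The same applies to
  Q_j = Ker P_j \<oplus> Im P_j, whose domain and indefiniteness are again Ker P_j and Im P_j.
\<close>

interpretation fs: vector_space "fscale :: complex \<Rightarrow> ('a \<Rightarrow> complex) \<Rightarrow> 'a \<Rightarrow> complex"
  by unfold_locales (auto simp: fscale_def fun_eq_iff algebra_simps)

lemma cspan_eq_span: "cspan = fs.span"
  by (simp add: cspan_def fun_eq_iff)

lemma cdim_eq_dim: "cdim = fs.dim"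
  by (simp add: cdim_def fun_eq_iff)

lemma cindependent_iff: "cindependent S \<longleftrightarrow> fs.independent S"
  by (simp add: cindependent_def)

lemma sum_apply: "(\<Sum>x\<in>A. f x) i = (\<Sum>x\<in>A. f x i)"
  by (induction A rule: infinite_finite_induct) auto

lemma span_subset_spanI: "A \<subseteq> fs.span B \<Longrightarrow> fs.span A \<subseteq> fs.span B"
  by (simp add: fs.span_minimal)

lemma span_image_eq_sum:
  assumes "finite I" "x \<in> fs.span (g ` I)"
  obtains c where "x = (\<Sum>i\<in>I. fscale (c i) (g i))"
proof -
  from assms(2) have "\<exists>c. x = (\<Sum>i\<in>I. fscale (c i) (g i))"
  proof (induction rule: fs.span_induct_alt)
    case base
    show ?case
      by (intro exI[of _ "\<lambda>_. 0"]) simp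
  next
    case (step c x y)
    then obtain j d where j: "j \<in> I" "x = g j" and d: "y = (\<Sum>i\<in>I. fscale (d i) (g i))"
      by blast
    have "(\<Sum>i\<in>I. fscale ((d(j := d j + c)) i) (g i))
        = (\<Sum>i\<in>I. fscale (d i) (g i) + (if i = j then fscale c (g i) else 0))"
      by (rule sum.cong) (auto simp: fs.scale_left_distrib)
    also have "\<dots> = fscale c x + y"
      using assms(1) j by (simp add: sum.distrib d add.commute)
    finally show ?case
      by metis
  qed
  with that show ?thesis
    by blast
qed

lemma sum_scale_in_span:
  assumes "\<And>i. i \<in> I \<Longrightarrow> i \<notin> J \<Longrightarrow> d i = 0"
  shows "(\<Sum>i\<in>I. fscale (d i) (h i)) \<in> fs.span (h ` J)"
proof (rule fs.span_sum)
  fix i assume "i \<in> I"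
  then show "fscale (d i) (h i) \<in> fs.span (h ` J)"
    using assms by (cases "i \<in> J") (auto intro: fs.span_scale fs.span_base simp: fs.span_zero)
qed

lemma cbasis_span: "cbasis N e \<Longrightarrow> fs.span (e ` {..<N}) = UNIV"
  by (simp add: cbasis_def cspan_eq_span)

lemma cbasis_independent: "cbasis N e \<Longrightarrow> fs.independent (e ` {..<N})"
  by (simp add: cbasis_def cindependent_iff)

lemma cbasis_coeff_eq_0:
  assumes E: "cbasis N E" and sum: "(\<Sum>i<N. fscale (d i) (E i)) = 0" and i: "i < N"
  shows "d i = 0"
proof -
  have inj: "inj_on E {..<N}"
    using E by (simp add: cbasis_def)
  define u where "u v = d (the_inv_into {..<N} E v)" for v
  have "(\<Sum>v\<in>E ` {..<N}. fscale (u v) v) = (\<Sum>i<N. fscale (d i) (E i))"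
    by (simp add: sum.reindex[OF inj] u_def the_inv_into_f_f[OF inj])
  then have "u (E i) = 0"
    using fs.independentD[OF cbasis_independent[OF E] finite_imageI subset_refl] sum i by simp
  then show ?thesis
    using i by (simp add: u_def the_inv_into_f_f[OF inj])
qed

lemma cdim_span_cbasis:
  assumes "cbasis N e" "J \<subseteq> {..<N}"
  shows "cdim (fs.span (e ` J)) = card J"
proof -
  have "fs.independent (e ` J)"
    using fs.independent_mono[OF cbasis_independent[OF assms(1)]] assms(2) by blast
  moreover have "inj_on e J"
    using assms by (auto simp: cbasis_def intro: inj_on_subset)
  ultimately show ?thesis
    by (simp add: cdim_eq_dim fs.dim_eq_card_independent card_image)
qed

section \<open>Exterior powers as spaces of minors\<close>

lemma wedge_eq_det:
  assumes "length is = m"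
  shows "wedge m vs is = Determinant.det (Matrix.mat m m (\<lambda>(i, j). vs i (is ! j)))"
proof -
  let ?A = "Matrix.mat m m (\<lambda>(i, j). vs i (is ! j))"
  have "Determinant.det ?A
      = (\<Sum>\<sigma> | \<sigma> permutes {0..<m}. of_int (sign \<sigma>) * (\<Prod>i = 0..<m. ?A $$ (i, \<sigma> i)))"
    by (rule det_def') simp
  also have "\<dots> = wedge m vs is"
    using assms by (auto simp: wedge_def lessThan_atLeast0 permutes_in_image intro!: sum.cong prod.cong)
  finally show ?thesis ..
qed

lemma wedge_cong: "(\<And>i. i < m \<Longrightarrow> vs i = ws i) \<Longrightarrow> wedge m vs = wedge m ws"
  unfolding wedge_def by (intro ext if_cong refl sum.cong) (auto intro!: prod.cong)

lemma wedge_permute: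
  assumes \<pi>: "\<pi> permutes {..<m}"
  shows "wedge m (vs \<circ> \<pi>) = fscale (of_int (sign \<pi>)) (wedge m vs)"
proof
  fix "is" :: "'a list"
  show "wedge m (vs \<circ> \<pi>) is = fscale (of_int (sign \<pi>)) (wedge m vs) is"
  proof (cases "length is = m")
    case True
    let ?A = "Matrix.mat m m (\<lambda>(i, j). vs i (is ! j))"
    have "Matrix.mat m m (\<lambda>(i, j). (vs \<circ> \<pi>) i (is ! j))
        = Matrix.mat m m (\<lambda>(i, j). ?A $$ (\<pi> i, j))"
      using permutes_in_image[OF \<pi>] by (intro eq_matI) auto
    then show ?thesis
      using det_permute_rows[of ?A m \<pi>] \<pi> True
      by (simp add: wedge_eq_det fscale_def lessThan_atLeast0)
  qed (simp add: wedge_def fscale_def)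
qed

lemma wedge_repeated:
  assumes "i < m" "j < m" "i \<noteq> j" "vs i = vs j"
  shows "wedge m vs = 0"
proof
  fix "is" :: "'a list"
  show "wedge m vs is = 0 is"
  proof (cases "length is = m")
    case True
    then show ?thesis
      using assms det_identical_rows[of "Matrix.mat m m (\<lambda>(i, j). vs i (is ! j))" m i j]
      by (simp add: wedge_eq_det)
  qed (simp add: wedge_def)
qed

lemma prod_upd_remove:
  fixes k m :: nat
  assumes "k < m"
  shows "(\<Prod>i<m. (vs(k := z)) i (g i)) = z (g k) * (\<Prod>i\<in>{..<m} - {k}. vs i (g i))"
  using assms by (simp add: prod.remove[of "{..<m}" k])

lemma wedge_upd_add:
  assumes "k < m"
  shows "wedge m (vs(k := x + y)) = wedge m (vs(k := x)) + wedge m (vs(k := y))"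
proof
  fix "is" :: "'a list"
  show "wedge m (vs(k := x + y)) is = (wedge m (vs(k := x)) + wedge m (vs(k := y))) is"
    unfolding wedge_def prod_upd_remove[OF assms]
    by (simp add: algebra_simps sum.distrib[symmetric])
qed

lemma wedge_upd_scale:
  assumes "k < m"
  shows "wedge m (vs(k := fscale c x)) = fscale c (wedge m (vs(k := x)))"
proof
  fix "is" :: "'a list"
  show "wedge m (vs(k := fscale c x)) is = fscale c (wedge m (vs(k := x))) is"
    unfolding wedge_def prod_upd_remove[OF assms]
    by (simp add: fscale_def algebra_simps sum_distrib_left)
qed

lemma wedge_upd_zero:
  assumes "k < m"
  shows "wedge m (vs(k := 0)) = 0"
  using wedge_upd_scale[OF assms, of vs 0 0] by simp

lemma wedge_upd_in_span:
  assumes "k < m" "x \<in> fs.span X"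
  shows "wedge m (vs(k := x)) \<in> fs.span ((\<lambda>y. wedge m (vs(k := y))) ` X)"
  using assms(2)
proof (induction rule: fs.span_induct_alt)
  case base
  show ?case by (simp only: wedge_upd_zero[OF assms(1)] fs.span_zero)
next
  case (step c x y)
  have "wedge m (vs(k := fscale c x + y)) = fscale c (wedge m (vs(k := x))) + wedge m (vs(k := y))"
    by (simp only: wedge_upd_add[OF assms(1)] wedge_upd_scale[OF assms(1)])
  then show ?case
    using fs.span_add[OF fs.span_scale[OF fs.span_base[OF imageI[OF step(1)]]] step(2)] by (simp only:)
qed

lemma wedge_expand_prefix:
  assumes "k \<le> m" "\<forall>i<k. vs i \<in> fs.span (e ` A i)"
  shows "wedge m vs \<in> fs.span {wedge m (\<lambda>i. if i < k then e (f i) else vs i) | f. \<forall>i<k. f i \<in> A i}"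
  using assms
proof (induction k)
  case 0
  then show ?case by (intro fs.span_base) auto
next
  case (Suc k)
  let ?vs = "\<lambda>f i. if i < k then e (f i) else vs i"
  let ?W = "{wedge m (\<lambda>i. if i < Suc k then e (f i) else vs i) | f. \<forall>i<Suc k. f i \<in> A i}"
  have "wedge m (?vs f) \<in> fs.span ?W" if f: "\<forall>i<k. f i \<in> A i" for f
  proof -
    have k: "k < m" and vk: "vs k \<in> fs.span (e ` A k)"
      using Suc.prems by auto
    have upd: "(?vs f)(k := vs k) = ?vs f"
      by (rule ext) simp
    have "wedge m (?vs f) \<in> fs.span ((\<lambda>t. wedge m ((?vs f)(k := e t))) ` A k)"
      using wedge_upd_in_span[OF k vk, of "?vs f"] unfolding image_image upd .
    moreover have "wedge m ((?vs f)(k := e t)) \<in> ?W" if t: "t \<in> A k" for t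
    proof -
      have "(?vs f)(k := e t) = (\<lambda>i. if i < Suc k then e ((f(k := t)) i) else vs i)"
        by (rule ext) (simp add: less_Suc_eq)
      moreover have "\<forall>i<Suc k. (f(k := t)) i \<in> A i"
        using f t by (simp add: less_Suc_eq)
      ultimately show ?thesis
        by (intro CollectI exI[of _ "f(k := t)"]) simp
    qed
    then have "(\<lambda>t. wedge m ((?vs f)(k := e t))) ` A k \<subseteq> ?W"
      by (rule image_subsetI)
    ultimately show ?thesis
      by (rule subsetD[OF fs.span_mono, rotated])
  qed
  then have "fs.span {wedge m (?vs f) | f. \<forall>i<k. f i \<in> A i} \<subseteq> fs.span ?W"
    by (intro span_subset_spanI) blast
  moreover have "wedge m vs \<in> fs.span {wedge m (?vs f) | f. \<forall>i<k. f i \<in> A i}"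
    using Suc.IH Suc.prems by simp
  ultimately show ?case
    by blast
qed

lemma wedge_in_span_wedges:
  assumes "\<forall>i<m. vs i \<in> fs.span (e ` A i)"
  shows "wedge m vs \<in> fs.span {wedge m (e \<circ> f) | f. \<forall>i<m. f i \<in> A i}"
proof -
  have "{wedge m (\<lambda>i. if i < m then e (f i) else vs i) | f. \<forall>i<m. f i \<in> A i}
      = {wedge m (e \<circ> f) | f. \<forall>i<m. f i \<in> A i}"
    by (auto intro!: wedge_cong)
  then show ?thesis
    using wedge_expand_prefix[OF order_refl assms] by simp
qed

lemma wedge_eq_scaled_mono:
  assumes inj: "inj_on f {..<m}"
  shows "\<exists>c. wedge m (e \<circ> f) = fscale c (mono e (f ` {..<m}))"
proof -
  define T where "T = f ` {..<m}"
  define s where "s = sorted_list_of_set T"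
  have card_T: "card T = m"
    using inj by (simp add: T_def card_image)
  have "length s = m" "distinct s" "set s = T"
    using card_T by (auto simp: s_def T_def)
  then have s: "bij_betw ((!) s) {..<m} T"
    by (intro bij_betw_nth) auto
  have f: "bij_betw f {..<m} T"
    using inj by (simp add: T_def bij_betw_def)
  define \<pi> where "\<pi> i = (if i < m then inv_into {..<m} ((!) s) (f i) else i)" for i
  have "bij_betw \<pi> {..<m} {..<m}"
    using bij_betw_trans[OF f bij_betw_inv_into[OF s]] by (rule bij_betw_cong[THEN iffD1, rotated]) (simp add: \<pi>_def)
  then have \<pi>: "\<pi> permutes {..<m}"
    by (rule bij_imp_permutes) (simp add: \<pi>_def)
  have "s ! \<pi> i = f i" if "i < m" for i
  proof -
    have "f i \<in> (!) s ` {..<m}"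
      using that f s by (auto simp: bij_betw_def)
    then show ?thesis
      using that by (simp add: \<pi>_def f_inv_into_f)
  qed
  then have "wedge m (e \<circ> f) = wedge m ((\<lambda>j. e (s ! j)) \<circ> \<pi>)"
    by (intro wedge_cong) simp
  also have "\<dots> = fscale (of_int (sign \<pi>)) (mono e T)"
    unfolding wedge_permute[OF \<pi>] by (simp add: mono_def card_T s_def)
  finally show ?thesis
    unfolding T_def by blast
qed

lemma wedge_in_span_monos:
  assumes "\<forall>i<m. vs i \<in> fs.span (e ` A i)"
  shows "wedge m vs \<in> fs.span {mono e (f ` {..<m}) | f. inj_on f {..<m} \<and> (\<forall>i<m. f i \<in> A i)}"
proof -
  let ?M = "{mono e (f ` {..<m}) | f. inj_on f {..<m} \<and> (\<forall>i<m. f i \<in> A i)}"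
  have "wedge m (e \<circ> f) \<in> fs.span ?M" if f: "\<forall>i<m. f i \<in> A i" for f
  proof (cases "inj_on f {..<m}")
    case True
    then obtain c where "wedge m (e \<circ> f) = fscale c (mono e (f ` {..<m}))"
      using wedge_eq_scaled_mono by blast
    moreover have "mono e (f ` {..<m}) \<in> ?M"
      using True f by blast
    ultimately show ?thesis
      by (simp add: fs.span_scale fs.span_base)
  next
    case False
    then obtain i j where "i < m" "j < m" "i \<noteq> j" "f i = f j"
      unfolding inj_on_def by blast
    then have "wedge m (e \<circ> f) = 0"
      by (intro wedge_repeated[of i m j]) auto
    then show ?thesis
      by (simp add: fs.span_zero)
  qed
  then have "fs.span {wedge m (e \<circ> f) | f. \<forall>i<m. f i \<in> A i} \<subseteq> fs.span ?M"
    by (intro span_subset_spanI) blast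
  with wedge_in_span_wedges[OF assms] show ?thesis
    by (rule subsetD[rotated])
qed

lemma ext_subspace: "fs.subspace (ext m)"
  by (simp add: ext_def cspan_eq_span)

lemma mono_in_ext: "card S = m \<Longrightarrow> mono e S \<in> ext m"
  unfolding ext_def cspan_eq_span mono_def by (rule fs.span_base) auto

lemma ext_subset_span_monos:
  assumes "cbasis N e"
  shows "ext m \<subseteq> fs.span (mono e ` {S. S \<subseteq> {..<N} \<and> card S = m})"
  unfolding ext_def cspan_eq_span
proof (rule span_subset_spanI, safe)
  fix vs :: "nat \<Rightarrow> 'a \<Rightarrow> complex"
  have "wedge m vs \<in> fs.span {mono e (f ` {..<m}) | f. inj_on f {..<m} \<and> (\<forall>i<m. f i \<in> {..<N})}"
    using cbasis_span[OF assms] by (intro wedge_in_span_monos) auto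
  moreover have "{mono e (f ` {..<m}) | f. inj_on f {..<m} \<and> (\<forall>i<m. f i \<in> {..<N})}
      \<subseteq> mono e ` {S. S \<subseteq> {..<N} \<and> card S = m}"
    by (auto simp: card_image)
  ultimately show "wedge m vs \<in> fs.span (mono e ` {S. S \<subseteq> {..<N} \<and> card S = m})"
    by (rule subsetD[OF fs.span_mono, rotated])
qed

lemma mono_lessThan: "mono e {..<m} = wedge m e"
proof -
  have "mono e {..<m} = wedge m (\<lambda>i. e (sorted_list_of_set {..<m} ! i))"
    by (simp add: mono_def)
  also have "\<dots> = wedge m e"
    by (rule wedge_cong) (simp add: lessThan_atLeast0)
  finally show ?thesis .
qed

lemma mono_lessThan_in_span:
  assumes "\<And>i. i < m \<Longrightarrow> E' i \<in> fs.span (E ` {..<m})"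
  shows "mono E' {..<m} \<in> fs.span {mono E {..<m}}"
proof -
  have "mono E' {..<m} \<in> fs.span {mono E (f ` {..<m}) | f. inj_on f {..<m} \<and> (\<forall>i<m. f i \<in> {..<m})}"
    unfolding mono_lessThan using assms by (intro wedge_in_span_monos) auto
  moreover have "{mono E (f ` {..<m}) | f. inj_on f {..<m} \<and> (\<forall>i<m. f i \<in> {..<m})} \<subseteq> {mono E {..<m}}"
  proof safe
    fix f assume "inj_on f {..<m}" "\<forall>i<m. f i \<in> {..<m}"
    then have "f ` {..<m} = {..<m}"
      by (intro card_subset_eq) (auto simp: card_image)
    then show "mono E (f ` {..<m}) = mono E {..<m}"
      by simp
  qed
  ultimately show ?thesis
    by (rule subsetD[OF fs.span_mono, rotated])
qed

text \<open>
  The monomials of the coordinate basis are independent, since evaluation at sorted index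
  lists separates them, and they lie in the span of the equally many monomials of any basis e;
  hence no monomial of e vanishes.
\<close>

lemma mono_delta_apply:
  fixes \<nu> :: "nat \<Rightarrow> 'a"
  assumes \<nu>: "inj_on \<nu> {..<N}" and T: "T \<subseteq> {..<N}" and T': "T' \<subseteq> {..<N}" "card T' = card T"
  shows "mono (\<lambda>t x. if x = \<nu> t then 1 else 0) T (map \<nu> (sorted_list_of_set T'))
    = (if T = T' then 1 else 0)"
proof -
  define m where "m = card T"
  define s where "s = sorted_list_of_set T"
  define s' where "s' = sorted_list_of_set T'"
  have fin: "finite T" "finite T'"
    using T T' finite_subset by auto
  have s: "length s = m" "distinct s" "set s = T" and s': "length s' = m" "set s' = T'"
    using fin T'(2) by (auto simp: s_def s'_def m_def)
  have N: "s ! i < N" "s' ! i < N" if "i < m" for i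
    using that s s' T T' nth_mem by fastforce+
  let ?\<delta> = "\<lambda>t x. if x = \<nu> t then 1 else (0::complex)"
  have mono: "mono ?\<delta> T = wedge m (\<lambda>i. ?\<delta> (s ! i))"
    by (simp add: mono_def s_def m_def)
  show ?thesis
  proof (cases "T = T'")
    case True
    then have "s' = s"
      by (simp add: s_def s'_def)
    have "\<nu> (s ! j) = \<nu> (s ! i) \<longleftrightarrow> i = j" if "i < m" "j < m" for i j
      using that N s \<nu> by (metis inj_onD lessThan_iff nth_eq_iff_index_eq)
    then have "Matrix.mat m m (\<lambda>(i, j). ?\<delta> (s ! i) (map \<nu> s ! j)) = 1\<^sub>m m"
      using s by (intro eq_matI) auto
    moreover have "mono ?\<delta> T (map \<nu> s')
        = Determinant.det (Matrix.mat m m (\<lambda>(i, j). ?\<delta> (s ! i) (map \<nu> s ! j)))"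
      unfolding mono \<open>s' = s\<close> by (rule wedge_eq_det) (simp add: s)
    ultimately show ?thesis
      using True by (simp add: s'_def)
  next
    case False
    then have "\<not> T \<subseteq> T'"
      using card_subset_eq[OF fin(2) _ T'(2)[symmetric]] by blast
    then obtain i where i: "i < m" "s ! i \<notin> T'"
      using s by (metis in_set_conv_nth subsetI)
    have zero: "(\<Prod>j<m. ?\<delta> (s ! j) (map \<nu> s' ! \<sigma> j)) = 0" if "\<sigma> permutes {..<m}" for \<sigma>
    proof (rule prod_zero)
      have "\<sigma> i < m"
        using i that permutes_in_image by fastforce
      then have "\<nu> (s' ! \<sigma> i) \<noteq> \<nu> (s ! i)"
        using i N \<nu> s' nth_mem by (metis inj_onD lessThan_iff)
      then show "\<exists>j\<in>{..<m}. ?\<delta> (s ! j) (map \<nu> s' ! \<sigma> j) = 0"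
        using i \<open>\<sigma> i < m\<close> s' by (intro bexI[of _ i]) auto
    qed simp
    have "(\<Sum>\<sigma> | \<sigma> permutes {..<m}.
        of_int (sign \<sigma>) * (\<Prod>j<m. ?\<delta> (s ! j) (map \<nu> s' ! \<sigma> j))) = 0"
      by (intro sum.neutral) (simp add: zero)
    then show ?thesis
      using False s' by (simp add: mono wedge_def s'_def)
  qed
qed

lemma delta_monos_independent:
  fixes \<nu> :: "nat \<Rightarrow> 'a"
  defines "\<delta> \<equiv> \<lambda>t x. if x = \<nu> t then 1 else (0::complex)"
  assumes \<nu>: "inj_on \<nu> {..<N}"
  shows "inj_on (mono \<delta>) {T. T \<subseteq> {..<N} \<and> card T = m}"
    and "fs.independent (mono \<delta> ` {T. T \<subseteq> {..<N} \<and> card T = m})"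
proof -
  define TT where "TT = {T. T \<subseteq> {..<N} \<and> card T = m}"
  define ev where "ev T = map \<nu> (sorted_list_of_set T)" for T
  have ev: "mono \<delta> T (ev T') = (if T = T' then 1 else 0)" if "T \<in> TT" "T' \<in> TT" for T T'
    using that mono_delta_apply[OF \<nu>, of T T'] by (simp add: TT_def \<delta>_def ev_def)
  show "inj_on (mono \<delta>) {T. T \<subseteq> {..<N} \<and> card T = m}"
  proof (rule inj_onI)
    fix T T' assume T: "T \<in> {T. T \<subseteq> {..<N} \<and> card T = m}" and T': "T' \<in> {T. T \<subseteq> {..<N} \<and> card T = m}"
      and eq: "mono \<delta> T = mono \<delta> T'"
    have "mono \<delta> T (ev T') = 1"
      using ev[of T' T'] T' eq by (simp add: TT_def)
    then show "T = T'"
      using ev[of T T'] T T' by (simp add: TT_def split: if_splits)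
  qed
  show "fs.independent (mono \<delta> ` {T. T \<subseteq> {..<N} \<and> card T = m})"
    unfolding fs.dependent_def TT_def[symmetric]
  proof clarify
    fix T assume T: "T \<in> TT" and dep: "mono \<delta> T \<in> fs.span (mono \<delta> ` TT - {mono \<delta> T})"
    have "fs.subspace {w. w (ev T) = 0}"
      by (rule fs.subspaceI) (auto simp: fscale_def)
    moreover have "mono \<delta> ` TT - {mono \<delta> T} \<subseteq> {w. w (ev T) = 0}"
    proof
      fix w assume "w \<in> mono \<delta> ` TT - {mono \<delta> T}"
      then obtain T' where "T' \<in> TT" "T' \<noteq> T" "w = mono \<delta> T'"
        by blast
      then show "w \<in> {w. w (ev T) = 0}"
        using ev[OF _ T] by simp
    qed
    ultimately have "mono \<delta> T (ev T) = 0"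
      using subsetD[OF fs.span_minimal dep] by blast
    then show False
      using ev[OF T T] by simp
  qed
qed

lemma mono_nonzero:
  fixes e :: "nat \<Rightarrow> 'n::finite \<Rightarrow> complex"
  assumes e: "cbasis CARD('n) e" and S: "S \<subseteq> {..<CARD('n)}"
  shows "mono e S \<noteq> 0"
proof
  assume S0: "mono e S = 0"
  define TT where "TT = {T. T \<subseteq> {..<CARD('n)} \<and> card T = card S}"
  obtain \<nu> :: "nat \<Rightarrow> 'n" where "bij_betw \<nu> {..<CARD('n)} UNIV"
    using ex_bij_betw_nat_finite[of "UNIV :: 'n set"] by (auto simp: atLeast0LessThan)
  then have \<nu>: "inj_on \<nu> {..<CARD('n)}"
    by (simp add: bij_betw_def)
  define \<delta> :: "nat \<Rightarrow> 'n \<Rightarrow> complex" where "\<delta> = (\<lambda>t x. if x = \<nu> t then 1 else 0)"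
  have fin: "finite TT"
    unfolding TT_def by (rule finite_subset[of _ "Pow {..<CARD('n)}"]) auto
  have "mono \<delta> ` TT \<subseteq> ext (card S)"
    using mono_in_ext unfolding TT_def by blast
  also have "\<dots> \<subseteq> fs.span (mono e ` TT)"
    using ext_subset_span_monos[OF e] unfolding TT_def by blast
  also have "\<dots> \<subseteq> fs.span (insert 0 (mono e ` (TT - {S})))"
    using S0 by (intro fs.span_mono) auto
  also have "\<dots> = fs.span (mono e ` (TT - {S}))"
    by (rule fs.span_insert_0)
  finally have sub: "mono \<delta> ` TT \<subseteq> fs.span (mono e ` (TT - {S}))" .
  have "fs.independent (mono \<delta> ` TT)"
    using delta_monos_independent(2)[OF \<nu>, of "card S"] by (simp add: TT_def \<delta>_def)
  then have "card (mono \<delta> ` TT) \<le> card (mono e ` (TT - {S}))"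
    using fs.independent_span_bound[OF finite_imageI[OF finite_Diff[OF fin]] _ sub] by blast
  also have "\<dots> < card TT"
    using fin S by (intro le_less_trans[OF card_image_le card_Diff1_less]) (auto simp: TT_def)
  also have "card TT = card (mono \<delta> ` TT)"
    using card_image[OF delta_monos_independent(1)[OF \<nu>, of "card S"]] by (simp add: TT_def \<delta>_def)
  finally show False
    by simp
qed

section \<open>Linear maps on exterior powers\<close>

lemma lin_on_zero:
  assumes "lin_on X L" "0 \<in> X"
  shows "L 0 = 0"
proof -
  have "L (fscale 0 0) = fscale 0 (L 0)"
    using assms unfolding lin_on_def by blast
  then show ?thesis
    by simp
qed

lemma lin_on_scale: "lin_on X L \<Longrightarrow> lin_on X (\<lambda>w. fscale c (L w))"
  unfolding lin_on_def by (simp add: fs.scale_right_distrib fs.scale_scale mult.commute)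

lemma lin_on_span_image:
  assumes L: "lin_on X L" and X: "fs.subspace X" and Y: "Y \<subseteq> X" and w: "w \<in> fs.span Y"
  shows "L w \<in> fs.span (L ` Y)"
proof -
  have "fs.subspace {w \<in> X. L w \<in> fs.span (L ` Y)}"
  proof (rule fs.subspaceI)
    show "0 \<in> {w \<in> X. L w \<in> fs.span (L ` Y)}"
      using lin_on_zero[OF L fs.subspace_0[OF X]] fs.subspace_0[OF X] by (simp add: fs.span_zero)
  qed (use L X in \<open>auto simp: lin_on_def fs.subspace_add fs.subspace_scale fs.span_add fs.span_scale\<close>)
  moreover have "Y \<subseteq> {w \<in> X. L w \<in> fs.span (L ` Y)}"
    using Y by (auto intro: fs.span_base)
  ultimately show ?thesis
    using fs.span_minimal w by blast
qed

lemma lin_on_eq_on_span: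
  assumes L: "lin_on X L" and L': "lin_on X L'" and X: "fs.subspace X" and Y: "Y \<subseteq> X"
    and eq: "\<And>y. y \<in> Y \<Longrightarrow> L y = L' y" and w: "w \<in> fs.span Y"
  shows "L w = L' w"
proof -
  have "fs.subspace {w \<in> X. L w = L' w}"
  proof (rule fs.subspaceI)
    show "0 \<in> {w \<in> X. L w = L' w}"
      using lin_on_zero[OF L fs.subspace_0[OF X]] lin_on_zero[OF L' fs.subspace_0[OF X]] fs.subspace_0[OF X]
      by simp
  qed (use L L' X in \<open>auto simp: lin_on_def fs.subspace_add fs.subspace_scale\<close>)
  moreover have "Y \<subseteq> {w \<in> X. L w = L' w}"
    using Y eq by auto
  ultimately show ?thesis
    using fs.span_minimal w by blast
qed

lemma lin_on_ext_in_span: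
  assumes L: "lin_on (ext m) L" and e: "cbasis N e" and w: "w \<in> ext m"
  shows "L w \<in> fs.span ((\<lambda>S. L (mono e S)) ` {S. S \<subseteq> {..<N} \<and> card S = m})"
proof -
  let ?M = "mono e ` {S. S \<subseteq> {..<N} \<and> card S = m}"
  have M: "?M \<subseteq> ext m"
    using mono_in_ext by blast
  have "w \<in> fs.span ?M"
    using ext_subset_span_monos[OF e] w by (rule subsetD)
  from lin_on_span_image[OF L ext_subspace M this] show ?thesis
    by (simp add: image_image)
qed

lemma lin_on_ext_vanishes:
  assumes L: "lin_on (ext m) L" and e: "cbasis N e" and w: "w \<in> ext m"
    and vanish: "\<And>S. S \<subseteq> {..<N} \<Longrightarrow> card S = m \<Longrightarrow> L (mono e S) = 0"
  shows "L w = 0"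
proof -
  have "(\<lambda>S. L (mono e S)) ` {S. S \<subseteq> {..<N} \<and> card S = m} \<subseteq> {0}"
    using vanish by blast
  then have "fs.span ((\<lambda>S. L (mono e S)) ` {S. S \<subseteq> {..<N} \<and> card S = m}) \<subseteq> fs.span {0}"
    by (rule fs.span_mono)
  then show ?thesis
    using lin_on_ext_in_span[OF L e w] by auto
qed

lemma lin_on_ext_eqI:
  assumes L: "lin_on (ext m) L" and L': "lin_on (ext m) L'" and e: "cbasis N e" and w: "w \<in> ext m"
    and eq: "\<And>S. S \<subseteq> {..<N} \<Longrightarrow> card S = m \<Longrightarrow> L (mono e S) = L' (mono e S)"
  shows "L w = L' w"
proof (rule lin_on_eq_on_span[OF L L' ext_subspace])
  show "mono e ` {S. S \<subseteq> {..<N} \<and> card S = m} \<subseteq> ext m"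
    using mono_in_ext by blast
  show "w \<in> fs.span (mono e ` {S. S \<subseteq> {..<N} \<and> card S = m})"
    using ext_subset_span_monos[OF e] w by (rule subsetD)
  show "\<And>y. y \<in> mono e ` {S. S \<subseteq> {..<N} \<and> card S = m} \<Longrightarrow> L y = L' y"
    using eq by blast
qed

section \<open>Linear relations in normal form\<close>

lemma dsum_eq_iff [simp]: "dsum v w = dsum v' w' \<longleftrightarrow> v = v' \<and> w = w'"
  by (auto simp: dsum_def fun_eq_iff split: sum.splits)

lemma dsum_zero [simp]: "dsum 0 0 = 0"
  by (auto simp: dsum_def fun_eq_iff split: sum.splits)

lemma dsum_add [simp]: "dsum v w + dsum v' w' = dsum (v + v') (w + w')"
  by (auto simp: dsum_def fun_eq_iff split: sum.splits)

lemma dsum_scale [simp]: "fscale c (dsum v w) = dsum (fscale c v) (fscale c w)"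
  by (auto simp: dsum_def fscale_def fun_eq_iff split: sum.splits)

lemma dsum_sum: "(\<Sum>i\<in>I. dsum (v i) (w i)) = dsum (\<Sum>i\<in>I. v i) (\<Sum>i\<in>I. w i)"
  by (auto simp: dsum_def sum_apply fun_eq_iff split: sum.splits)

lemma subspace_Ker:
  assumes "fs.subspace P"
  shows "fs.subspace (Ker P)"
proof (rule fs.subspaceI)
  show "0 \<in> Ker P"
    using fs.subspace_0[OF assms] by (simp add: Ker_def)
  show "x + y \<in> Ker P" if "x \<in> Ker P" "y \<in> Ker P" for x y
    using that fs.subspace_add[OF assms, of "dsum x 0" "dsum y 0"] by (simp add: Ker_def)
  show "fscale c x \<in> Ker P" if "x \<in> Ker P" for c x
    using that fs.subspace_scale[OF assms, of "dsum x 0" c] by (simp add: Ker_def)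
qed

lemma subspace_Indef:
  assumes "fs.subspace P"
  shows "fs.subspace (Indef P)"
proof (rule fs.subspaceI)
  show "0 \<in> Indef P"
    using fs.subspace_0[OF assms] by (simp add: Indef_def)
  show "x + y \<in> Indef P" if "x \<in> Indef P" "y \<in> Indef P" for x y
    using that fs.subspace_add[OF assms, of "dsum 0 x" "dsum 0 y"] by (simp add: Indef_def)
  show "fscale c x \<in> Indef P" if "x \<in> Indef P" for c x
    using that fs.subspace_scale[OF assms, of "dsum 0 x" c] by (simp add: Indef_def)
qed

lemma subspace_Dom:
  assumes "fs.subspace P"
  shows "fs.subspace (Dom P)"
proof (rule fs.subspaceI)
  show "0 \<in> Dom P"
    using fs.subspace_0[OF assms] by (auto simp: Dom_def intro!: exI[of _ 0])
  show "x + y \<in> Dom P" if xy: "x \<in> Dom P" "y \<in> Dom P" for x y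
  proof -
    obtain v w where "dsum x v \<in> P" "dsum y w \<in> P"
      using xy by (auto simp: Dom_def)
    then show ?thesis
      using fs.subspace_add[OF assms] by (force simp: Dom_def)
  qed
  show "fscale c x \<in> Dom P" if x: "x \<in> Dom P" for c x
  proof -
    obtain v where "dsum x v \<in> P"
      using x by (auto simp: Dom_def)
    then show ?thesis
      using fs.subspace_scale[OF assms] by (force simp: Dom_def)
  qed
qed

lemma subspace_Im:
  assumes "fs.subspace P"
  shows "fs.subspace (Im P)"
proof (rule fs.subspaceI)
  show "0 \<in> Im P"
    using fs.subspace_0[OF assms] by (auto simp: Im_def intro!: exI[of _ 0])
  show "x + y \<in> Im P" if xy: "x \<in> Im P" "y \<in> Im P" for x y
  proof -
    obtain v w where "dsum v x \<in> P" "dsum w y \<in> P"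
      using xy by (auto simp: Im_def)
    then show ?thesis
      using fs.subspace_add[OF assms] by (force simp: Im_def)
  qed
  show "fscale c x \<in> Im P" if x: "x \<in> Im P" for c x
  proof -
    obtain v where "dsum v x \<in> P"
      using x by (auto simp: Im_def)
    then show ?thesis
      using fs.subspace_scale[OF assms] by (force simp: Im_def)
  qed
qed

lemma Dom_KerIm: "fs.subspace P \<Longrightarrow> Dom (KerIm P) = Ker P"
  using fs.subspace_0[OF subspace_Im] by (auto simp: Dom_def KerIm_def)

lemma Indef_KerIm: "fs.subspace P \<Longrightarrow> Indef (KerIm P) = Im P"
  using fs.subspace_0[OF subspace_Ker] by (auto simp: Indef_def KerIm_def)

definition normal_generator ::
    "(nat \<Rightarrow> 'n \<Rightarrow> complex) \<Rightarrow> (nat \<Rightarrow> 'n \<Rightarrow> complex) \<Rightarrow> nat \<Rightarrow> nat \<Rightarrow> nat \<Rightarrow>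
      ('n + 'n \<Rightarrow> complex)"
  where "normal_generator e E a b i = dsum (if a \<le> i then e i else 0) (if i < a + b then E i else 0)"

locale normal_form =
  fixes P :: "('n::finite + 'n \<Rightarrow> complex) set" and e E :: "nat \<Rightarrow> 'n \<Rightarrow> complex" and a b :: nat
  assumes le_card: "a + b \<le> CARD('n)"
    and basis_e: "cbasis CARD('n) e" and basis_E: "cbasis CARD('n) E"
    and span_generators: "P = fs.span (normal_generator e E a b ` {..<CARD('n)})"
begin

lemma subspace: "fs.subspace P"
  by (simp add: span_generators)

lemma generator_in: "i < CARD('n) \<Longrightarrow> normal_generator e E a b i \<in> P"
  by (simp add: span_generators fs.span_base)

lemma mem_coeffs:
  assumes "dsum v w \<in> P"
  obtains c where "v = (\<Sum>i<CARD('n). fscale (if a \<le> i then c i else 0) (e i))"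
    and "w = (\<Sum>i<CARD('n). fscale (if i < a + b then c i else 0) (E i))"
proof -
  obtain c where "dsum v w = (\<Sum>i<CARD('n). fscale (c i) (normal_generator e E a b i))"
    using span_image_eq_sum assms span_generators by blast
  also have "\<dots> = (\<Sum>i<CARD('n). dsum (fscale (if a \<le> i then c i else 0) (e i))
      (fscale (if i < a + b then c i else 0) (E i)))"
    by (rule sum.cong) (simp_all add: normal_generator_def)
  also have "\<dots> = dsum (\<Sum>i<CARD('n). fscale (if a \<le> i then c i else 0) (e i))
      (\<Sum>i<CARD('n). fscale (if i < a + b then c i else 0) (E i))"
    by (rule dsum_sum)
  finally show ?thesis
    using that by simp
qed

lemma Ker_eq: "Ker P = fs.span (e ` {a + b..<CARD('n)})"
proof
  show "Ker P \<subseteq> fs.span (e ` {a + b..<CARD('n)})"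
  proof
    fix v assume "v \<in> Ker P"
    then obtain c where v: "v = (\<Sum>i<CARD('n). fscale (if a \<le> i then c i else 0) (e i))"
      and 0: "0 = (\<Sum>i<CARD('n). fscale (if i < a + b then c i else 0) (E i))"
      by (auto simp: Ker_def elim: mem_coeffs)
    have "c i = 0" if "i < a + b" for i
      using cbasis_coeff_eq_0[OF basis_E 0[symmetric], of i] that le_card by simp
    then show "v \<in> fs.span (e ` {a + b..<CARD('n)})"
      unfolding v by (intro sum_scale_in_span) auto
  qed
  have "e i \<in> Ker P" if "a + b \<le> i" "i < CARD('n)" for i
    using that generator_in[of i] by (simp add: Ker_def normal_generator_def)
  then show "fs.span (e ` {a + b..<CARD('n)}) \<subseteq> Ker P"
    by (intro fs.span_minimal subspace_Ker subspace) auto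
qed

lemma Indef_eq: "Indef P = fs.span (E ` {..<a})"
proof
  show "Indef P \<subseteq> fs.span (E ` {..<a})"
  proof
    fix w assume "w \<in> Indef P"
    then obtain c where 0: "0 = (\<Sum>i<CARD('n). fscale (if a \<le> i then c i else 0) (e i))"
      and w: "w = (\<Sum>i<CARD('n). fscale (if i < a + b then c i else 0) (E i))"
      by (auto simp: Indef_def elim: mem_coeffs)
    have "c i = 0" if "a \<le> i" "i < CARD('n)" for i
      using cbasis_coeff_eq_0[OF basis_e 0[symmetric], of i] that by simp
    then show "w \<in> fs.span (E ` {..<a})"
      unfolding w by (intro sum_scale_in_span) auto
  qed
  have "E i \<in> Indef P" if "i < a" for i
    using that le_card generator_in[of i] by (simp add: Indef_def normal_generator_def)
  then show "fs.span (E ` {..<a}) \<subseteq> Indef P"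
    by (intro fs.span_minimal subspace_Indef subspace) auto
qed

lemma Dom_eq: "Dom P = fs.span (e ` {a..<CARD('n)})"
proof
  show "Dom P \<subseteq> fs.span (e ` {a..<CARD('n)})"
  proof
    fix v assume "v \<in> Dom P"
    then obtain c where "v = (\<Sum>i<CARD('n). fscale (if a \<le> i then c i else 0) (e i))"
      by (auto simp: Dom_def elim: mem_coeffs)
    then show "v \<in> fs.span (e ` {a..<CARD('n)})"
      by (auto intro!: sum_scale_in_span)
  qed
  have "e i \<in> Dom P" if "a \<le> i" "i < CARD('n)" for i
    using that generator_in[of i] unfolding Dom_def normal_generator_def by auto
  then show "fs.span (e ` {a..<CARD('n)}) \<subseteq> Dom P"
    by (intro fs.span_minimal subspace_Dom subspace) auto
qed

lemma Im_eq: "Im P = fs.span (E ` {..<a + b})"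
proof
  show "Im P \<subseteq> fs.span (E ` {..<a + b})"
  proof
    fix w assume "w \<in> Im P"
    then obtain c where "w = (\<Sum>i<CARD('n). fscale (if i < a + b then c i else 0) (E i))"
      by (auto simp: Im_def elim: mem_coeffs)
    then show "w \<in> fs.span (E ` {..<a + b})"
      by (auto intro!: sum_scale_in_span split: if_splits)
  qed
  have "E i \<in> Im P" if "i < a + b" for i
    using that le_card generator_in[of i] unfolding Im_def normal_generator_def by auto
  then show "fs.span (E ` {..<a + b}) \<subseteq> Im P"
    by (intro fs.span_minimal subspace_Im subspace) auto
qed

lemma cdim_Indef: "cdim (Indef P) = a"
  using cdim_span_cbasis[OF basis_E, of "{..<a}"] le_card by (simp add: Indef_eq)

lemma cdim_Im: "cdim (Im P) = a + b"
  using cdim_span_cbasis[OF basis_E, of "{..<a + b}"] le_card by (simp add: Im_eq)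

lemma cdim_Dom: "cdim (Dom P) = CARD('n) - a"
  using cdim_span_cbasis[OF basis_e, of "{a..<CARD('n)}"] by (simp add: Dom_eq subset_eq)

lemma rk_eq: "rk P = b"
  using cdim_span_cbasis[OF basis_e, of "{a..<CARD('n)}"] cdim_span_cbasis[OF basis_e, of "{a + b..<CARD('n)}"]
    le_card by (simp add: rk_def Dom_eq Ker_eq subset_eq)

lemma cdim_Im_eq: "cdim (Im P) = cdim (Indef P) + rk P"
  by (simp add: cdim_Im cdim_Indef rk_eq)

lemma cdim_UNIV: "cdim (UNIV :: ('n \<Rightarrow> complex) set) = CARD('n)"
  using cdim_span_cbasis[OF basis_e, of "{..<CARD('n)}"] cbasis_span[OF basis_e] by simp

lemma cdim_Indef_eq_0: "Dom P = UNIV \<Longrightarrow> cdim (Indef P) = 0"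
  using cdim_Dom cdim_UNIV cdim_Indef le_card by simp

end

section \<open>The operators lambda^m(P) in adapted bases\<close>

locale lambda_form = normal_form P e E a b
  for P :: "('n::finite + 'n \<Rightarrow> complex) set" and e E a b +
  fixes m :: nat and L :: "('n list \<Rightarrow> complex) \<Rightarrow> 'n list \<Rightarrow> complex"
  assumes linear: "lin_on (ext m) L"
    and on_monos: "\<And>S. S \<subseteq> {..<CARD('n)} \<Longrightarrow> card S = m \<Longrightarrow>
      L (mono e S) = (if {..<a} \<subseteq> S \<and> S \<subseteq> {..<a + b} then mono E S else 0)"

lemma lambda_m_imp_lambda_form:
  fixes P :: "('n::finite + 'n \<Rightarrow> complex) set"
  assumes "lambda_m m P L"
  obtains e E where "lambda_form P e E (cdim (Indef P)) (rk P) m L"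
proof -
  obtain e E a b where le: "a + b \<le> CARD('n)" and bases: "cbasis CARD('n) e" "cbasis CARD('n) E"
    and P: "P = cspan ({dsum 0 (E i) | i. i < a} \<union> {dsum (e i) (E i) | i. a \<le> i \<and> i < a + b}
                \<union> {dsum (e i) 0 | i. a + b \<le> i \<and> i < CARD('n)})"
    and L: "lin_on (ext m) L"
    and on_monos: "\<forall>S. S \<subseteq> {..<CARD('n)} \<and> card S = m \<longrightarrow>
        L (mono e S) = (if {..<a} \<subseteq> S \<and> S \<subseteq> {..<a + b} then mono E S else 0)"
    using assms unfolding lambda_m_def by blast
  let ?g = "normal_generator e E a b"
  have "{dsum 0 (E i) | i. i < a} = (\<lambda>i. dsum 0 (E i)) ` {..<a}"
    "{dsum (e i) (E i) | i. a \<le> i \<and> i < a + b} = (\<lambda>i. dsum (e i) (E i)) ` {a..<a + b}"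
    "{dsum (e i) 0 | i. a + b \<le> i \<and> i < CARD('n)} = (\<lambda>i. dsum (e i) 0) ` {a + b..<CARD('n)}"
    by auto
  moreover have "(\<lambda>i. dsum 0 (E i)) ` {..<a} = ?g ` {..<a}"
    "(\<lambda>i. dsum (e i) (E i)) ` {a..<a + b} = ?g ` {a..<a + b}"
    "(\<lambda>i. dsum (e i) 0) ` {a + b..<CARD('n)} = ?g ` {a + b..<CARD('n)}"
    by (auto simp: normal_generator_def intro!: image_cong)
  moreover have "{..<a} \<union> {a..<a + b} \<union> {a + b..<CARD('n)} = {..<CARD('n)}"
    using le by auto
  ultimately have "{dsum 0 (E i) | i. i < a} \<union> {dsum (e i) (E i) | i. a \<le> i \<and> i < a + b}
      \<union> {dsum (e i) 0 | i. a + b \<le> i \<and> i < CARD('n)} = ?g ` {..<CARD('n)}"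
    by (metis image_Un)
  then have "P = fs.span (?g ` {..<CARD('n)})"
    unfolding P cspan_eq_span by (rule arg_cong)
  then have nf: "normal_form P e E a b"
    using le bases by unfold_locales
  then have "lambda_form P e E a b m L"
    using L on_monos by (simp add: lambda_form_def lambda_form_axioms_def)
  then show ?thesis
    using that normal_form.cdim_Indef[OF nf] normal_form.rk_eq[OF nf] by simp
qed

context lambda_form
begin

lemma op_nonzero_iff:
  assumes "m \<le> CARD('n)"
  shows "op_nonzero m L \<longleftrightarrow> a \<le> m \<and> m \<le> a + b"
proof
  assume "op_nonzero m L"
  then obtain w where w: "w \<in> ext m" "L w \<noteq> 0"
    by (auto simp: op_nonzero_def)
  show "a \<le> m \<and> m \<le> a + b"
  proof (rule ccontr)
    assume out: "\<not> (a \<le> m \<and> m \<le> a + b)"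
    have "L (mono e S) = 0" if S: "S \<subseteq> {..<CARD('n)}" "card S = m" for S
    proof -
      have "finite S"
        using S finite_subset by blast
      then have "\<not> ({..<a} \<subseteq> S \<and> S \<subseteq> {..<a + b})"
        using out S card_mono[of S "{..<a}"] card_mono[of "{..<a + b}" S] by auto
      then show ?thesis
        unfolding on_monos[OF S] by (rule if_not_P)
    qed
    then have "L w = 0"
      by (rule lin_on_ext_vanishes[OF linear basis_e w(1)])
    with w show False
      by simp
  qed
next
  assume "a \<le> m \<and> m \<le> a + b"
  then have "L (mono e {..<m}) = mono E {..<m}"
    using on_monos[of "{..<m}"] assms by auto
  moreover have "mono E {..<m} \<noteq> 0"
    using mono_nonzero[OF basis_E] assms by simp
  ultimately show "op_nonzero m L"
    using mono_in_ext[of "{..<m}" m e] by (auto simp: op_nonzero_def)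
qed

lemma on_monos_boundary:
  assumes m: "m = a \<or> m = a + b" and S: "S \<subseteq> {..<CARD('n)}" "card S = m"
  shows "L (mono e S) = (if S = {..<m} then mono E {..<m} else 0)"
proof -
  have "finite S"
    using S finite_subset by blast
  have "{..<a} \<subseteq> S \<and> S \<subseteq> {..<a + b} \<longleftrightarrow> S = {..<m}"
  proof
    assume h: "{..<a} \<subseteq> S \<and> S \<subseteq> {..<a + b}"
    from m show "S = {..<m}"
    proof
      assume "m = a"
      then show ?thesis
        using h S(2) card_subset_eq[OF \<open>finite S\<close>, of "{..<m}"] by simp
    next
      assume "m = a + b"
      then show ?thesis
        using h S(2) card_subset_eq[of "{..<m}" S] by simp
    qed
  qed (use m in auto)
  then show ?thesis
    using on_monos[OF S] by simp
qed

lemma image_boundary: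
  assumes m: "m \<le> CARD('n)" "m = a \<or> m = a + b"
  shows "L ` ext m = fs.span {mono E {..<m}}"
proof
  have "(\<lambda>S. L (mono e S)) ` {S. S \<subseteq> {..<CARD('n)} \<and> card S = m} \<subseteq> fs.span {mono E {..<m}}"
    using on_monos_boundary[OF m(2)] by (auto intro: fs.span_base fs.span_zero)
  then have "fs.span ((\<lambda>S. L (mono e S)) ` {S. S \<subseteq> {..<CARD('n)} \<and> card S = m})
      \<subseteq> fs.span {mono E {..<m}}"
    by (rule span_subset_spanI)
  then show "L ` ext m \<subseteq> fs.span {mono E {..<m}}"
    using lin_on_ext_in_span[OF linear basis_e] by (intro image_subsetI) (rule subsetD)
  show "fs.span {mono E {..<m}} \<subseteq> L ` ext m"
  proof
    fix x assume "x \<in> fs.span {mono E {..<m}}"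
    then obtain k where x: "x = fscale k (mono E {..<m})"
      by (auto simp: fs.span_singleton)
    have mono: "mono e {..<m} \<in> ext m"
      by (rule mono_in_ext) simp
    then have "L (fscale k (mono e {..<m})) = x"
      using linear on_monos_boundary[OF m(2), of "{..<m}"] m(1) x by (simp add: lin_on_def)
    moreover have "fscale k (mono e {..<m}) \<in> ext m"
      using fs.subspace_scale[OF ext_subspace mono] .
    ultimately show "x \<in> L ` ext m"
      by blast
  qed
qed

lemma op_rank_boundary:
  assumes "m \<le> CARD('n)" "m = a \<or> m = a + b"
  shows "op_rank m L = 1"
proof -
  have "fs.independent {mono E {..<m}}"
    using mono_nonzero[OF basis_E] assms(1) by (simp add: fs.independent_insert)
  then show ?thesis
    by (simp add: op_rank_def image_boundary[OF assms] cdim_eq_dim fs.dim_eq_card_independent)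
qed

text \<open>
  As S \<noteq> {..<m}, the monomial e'_S has a factor e'_s with s \<ge> m, which lies in the span of
  e_m, ..., e_(n-1); so e'_S expands into e-monomials containing an index \<ge> m, all killed by L.
\<close>

lemma vanishes_boundary:
  assumes m: "m = a \<or> m = a + b"
    and e': "\<And>i. m \<le> i \<Longrightarrow> i < CARD('n) \<Longrightarrow> e' i \<in> fs.span (e ` {m..<CARD('n)})"
    and S: "S \<subseteq> {..<CARD('n)}" "card S = m" "S \<noteq> {..<m}"
  shows "L (mono e' S) = 0"
proof -
  define N where "N = CARD('n)"
  define l where "l = sorted_list_of_set S"
  have fin: "finite S"
    using S finite_subset by blast
  have l: "length l = m" "set l = S"
    using fin S by (auto simp: l_def)
  have "\<not> S \<subseteq> {..<m}"
    using S card_subset_eq[of "{..<m}" S] by auto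
  then obtain s where s: "s \<in> S" "m \<le> s"
    by (meson lessThan_iff not_le subsetI)
  then obtain i0 where i0: "i0 < m" "l ! i0 = s"
    using l by (metis in_set_conv_nth)
  define A where "A i = (if i = i0 then {m..<N} else {..<N})" for i
  let ?M = "{mono e (f ` {..<m}) | f. inj_on f {..<m} \<and> (\<forall>i<m. f i \<in> A i)}"
  have "\<forall>i<m. e' (l ! i) \<in> fs.span (e ` A i)"
    using e' i0 s S l cbasis_span[OF basis_e] by (auto simp: A_def N_def)
  then have "mono e' S \<in> fs.span ?M"
    using wedge_in_span_monos[of m "\<lambda>i. e' (l ! i)" e A] by (simp add: mono_def l_def S(2))
  moreover have "?M \<subseteq> ext m"
    by (auto intro!: mono_in_ext simp: card_image)
  moreover have "L ` ?M \<subseteq> {0}"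
  proof safe
    fix f assume f: "inj_on f {..<m}" "\<forall>i<m. f i \<in> A i"
    then have "f ` {..<m} \<subseteq> {..<N}" "m \<le> f i0" "f i0 \<in> f ` {..<m}"
      using i0 by (auto simp: A_def split: if_splits)
    then have "f ` {..<m} \<subseteq> {..<N}" "f ` {..<m} \<noteq> {..<m}"
      by (blast, metis lessThan_iff not_le)
    then show "L (mono e (f ` {..<m})) = 0"
      using on_monos_boundary[OF m, of "f ` {..<m}"] f(1) by (simp add: card_image N_def)
  qed
  then have "fs.span (L ` ?M) \<subseteq> {0}"
    using fs.span_mono[of "L ` ?M" "{0}"] by simp
  ultimately show ?thesis
    using lin_on_span_image[OF linear ext_subspace] by blast
qed

end

text \<open>
  Both operators kill all e'-monomials except e'_0 \<and> ... \<and> e'_(m-1) and send that one into the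
  line spanned by E_0 \<and> ... \<and> E_(m-1).
\<close>

lemma propto_boundary:
  fixes P P' :: "('n::finite + 'n \<Rightarrow> complex) set"
  assumes L: "lambda_form P e E a b m L" and L': "lambda_form P' e' E' a' b' m L'"
    and m: "m \<le> CARD('n)" "m = a \<or> m = a + b" "m = a' \<or> m = a' + b'"
    and e'_span: "\<And>i. m \<le> i \<Longrightarrow> i < CARD('n) \<Longrightarrow> e' i \<in> fs.span (e ` {m..<CARD('n)})"
    and E'_span: "\<And>i. i < m \<Longrightarrow> E' i \<in> fs.span (E ` {..<m})"
  shows "op_propto m L L'"
proof -
  interpret L: lambda_form P e E a b m L by (rule L)
  interpret L': lambda_form P' e' E' a' b' m L' by (rule L')
  define \<omega> where "\<omega> = mono E {..<m}"
  have \<omega>: "\<omega> \<noteq> 0"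
    using mono_nonzero[OF L.basis_E] m(1) by (simp add: \<omega>_def)
  obtain d where d: "mono E' {..<m} = fscale d \<omega>"
    using mono_lessThan_in_span[of m E' E, OF E'_span] by (auto simp: fs.span_singleton \<omega>_def)
  have "d \<noteq> 0"
    using d mono_nonzero[OF L'.basis_E] m(1) by auto
  have "L (mono e' {..<m}) \<in> fs.span {\<omega>}"
    using L.image_boundary[OF m(1,2)] mono_in_ext[of "{..<m}" m e'] by (auto simp: \<omega>_def)
  then obtain c where c: "L (mono e' {..<m}) = fscale c \<omega>"
    by (auto simp: fs.span_singleton)
  have scaled: "L w = fscale (c / d) (L' w)" if "w \<in> ext m" for w
  proof (rule lin_on_ext_eqI[OF L.linear lin_on_scale[OF L'.linear] L'.basis_e that])
    fix S assume S: "S \<subseteq> {..<CARD('n)}" "card S = m"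
    show "L (mono e' S) = fscale (c / d) (L' (mono e' S))"
    proof (cases "S = {..<m}")
      case True
      then show ?thesis
        using c d \<open>d \<noteq> 0\<close> L'.on_monos_boundary[OF m(3) S] by simp
    next
      case False
      then show ?thesis
        using L.vanishes_boundary[OF m(2) e'_span S False] L'.on_monos_boundary[OF m(3) S] by simp
    qed
  qed
  have "c \<noteq> 0"
  proof
    assume "c = 0"
    then have "L (mono e {..<m}) = 0"
      using scaled[OF mono_in_ext[of "{..<m}" m e]] by simp
    moreover have "L (mono e {..<m}) = \<omega>"
      using L.on_monos_boundary[OF m(2), of "{..<m}"] m(1) by (simp add: \<omega>_def)
    ultimately show False
      using \<omega> by simp
  qed
  with \<open>d \<noteq> 0\<close> scaled show ?thesis
    unfolding op_propto_def by (intro exI[of _ "c / d"]) simp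
qed

lemma propto_adjacent:
  fixes P P' :: "('n::finite + 'n \<Rightarrow> complex) set"
  assumes L: "lambda_form P e E a b m L" and L': "lambda_form P' e' E' a' b' m L'"
    and m: "m \<le> CARD('n)" "m = a + b" and adj: "Dom P' = Ker P" "Indef P' = Im P"
  shows "op_propto m L L'"
proof -
  interpret L: lambda_form P e E a b m L by (rule L)
  interpret L': lambda_form P' e' E' a' b' m L' by (rule L')
  have a': "a' = m"
    using L'.cdim_Indef L.cdim_Im adj m by simp
  show ?thesis
  proof (rule propto_boundary[OF L L' m(1)])
    show "m = a \<or> m = a + b" "m = a' \<or> m = a' + b'"
      using m a' by auto
    show "e' i \<in> fs.span (e ` {m..<CARD('n)})" if "m \<le> i" "i < CARD('n)" for i
    proof -
      have "e' i \<in> Dom P'"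
        unfolding L'.Dom_eq using that a' by (intro fs.span_base) auto
      then show ?thesis
        using adj L.Ker_eq m by simp
    qed
    show "E' i \<in> fs.span (E ` {..<m})" if "i < m" for i
    proof -
      have "E' i \<in> Indef P'"
        unfolding L'.Indef_eq using that a' by (intro fs.span_base) auto
      then show ?thesis
        using adj L.Im_eq m by simp
    qed
  qed
qed

lemma adjacent_rank_one_propto:
  fixes P P' :: "('n::finite + 'n \<Rightarrow> complex) set"
  assumes L: "lambda_form P e E a b m L" and L': "lambda_form P' e' E' a' b' m L'"
    and m: "m \<le> CARD('n)" "m = a + b" and adj: "Dom P' = Ker P" "Indef P' = Im P"
  shows "op_rank m L = 1" "op_rank m L' = 1" "op_propto m L L'"
    and "\<forall>LQ. lambda_m m (KerIm P) LQ \<longrightarrow> op_propto m L LQ"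
proof -
  interpret L: lambda_form P e E a b m L by (rule L)
  interpret L': lambda_form P' e' E' a' b' m L' by (rule L')
  have "a' = m"
    using L'.cdim_Indef L.cdim_Im adj m by simp
  then show "op_rank m L = 1" "op_rank m L' = 1"
    using L.op_rank_boundary L'.op_rank_boundary m by auto
  show "op_propto m L L'"
    by (rule propto_adjacent[OF L L' m adj])
  show "\<forall>LQ. lambda_m m (KerIm P) LQ \<longrightarrow> op_propto m L LQ"
  proof clarify
    fix LQ assume "lambda_m m (KerIm P) LQ"
    then obtain eQ EQ where "lambda_form (KerIm P) eQ EQ (cdim (Indef (KerIm P))) (rk (KerIm P)) m LQ"
      by (rule lambda_m_imp_lambda_form)
    then show "op_propto m L LQ"
      by (rule propto_adjacent[OF L _ m Dom_KerIm[OF L.subspace] Indef_KerIm[OF L.subspace]])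
  qed
qed

section \<open>Hinges\<close>

lemma hinge_dims:
  fixes Ps :: "nat \<Rightarrow> ('n::finite + 'n \<Rightarrow> complex) set"
  assumes hinge: "hinge Ps k"
    and nf: "\<And>j. j \<in> {1..k} \<Longrightarrow> \<exists>e E a b. normal_form (Ps j) e E a b"
  shows "cdim (Indef (Ps 1)) = 0"
    and "\<And>j. 1 \<le> j \<Longrightarrow> j + 1 \<le> k \<Longrightarrow>
      cdim (Indef (Ps (j + 1))) = cdim (Indef (Ps j)) + rk (Ps j)"
    and "cdim (Indef (Ps k)) + rk (Ps k) = CARD('n)"
proof -
  have k: "1 \<in> {1..k}" "k \<in> {1..k}"
    using hinge by (auto simp: hinge_def)
  show "cdim (Indef (Ps 1)) = 0"
    using nf[OF k(1)] normal_form.cdim_Indef_eq_0 hinge by (auto simp: hinge_def)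
  show "cdim (Indef (Ps (j + 1))) = cdim (Indef (Ps j)) + rk (Ps j)" if "1 \<le> j" "j + 1 \<le> k" for j
    using that nf[of j] normal_form.cdim_Im_eq hinge by (fastforce simp: hinge_def)
  show "cdim (Indef (Ps k)) + rk (Ps k) = CARD('n)"
    using nf[OF k(2)] normal_form.cdim_Im_eq normal_form.cdim_UNIV hinge by (fastforce simp: hinge_def)
qed

lemma chain_mono:
  fixes a b :: "nat \<Rightarrow> nat"
  assumes step: "\<And>j. 1 \<le> j \<Longrightarrow> j + 1 \<le> k \<Longrightarrow> a (j + 1) = a j + b j"
    and "1 \<le> s" "s \<le> t" "t \<le> k"
  shows "a s \<le> a t"
  using assms(3,4)
proof (induction t rule: dec_induct)
  case (step t)
  then show ?case
    using assms(1,2) by (metis Suc_eq_plus1 Suc_leD le_add1 le_trans)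
qed simp

lemma chain_overlap:
  fixes a b :: "nat \<Rightarrow> nat"
  assumes step: "\<And>j. 1 \<le> j \<Longrightarrow> j + 1 \<le> k \<Longrightarrow> a (j + 1) = a j + b j"
    and pos: "\<And>j. j \<in> {1..k} \<Longrightarrow> 0 < b j"
    and st: "s \<in> {1..k}" "t \<in> {1..k}" "s < t" and m: "a t \<le> m" "m \<le> a s + b s"
  shows "t = s + 1 \<and> m = a t"
proof -
  have "a (s + 1) = a s + b s"
    using st step by simp
  moreover have "a (s + 1) \<le> a t"
    using st by (intro chain_mono[of k a b, OF step]) auto
  moreover have "a (s + 1) < a t" if "s + 1 < t"
    using that st step[of "s + 1"] pos[of "s + 1"] chain_mono[of k a b, OF step, of "s + 2" t]
    by auto
  ultimately have "m = a t" "\<not> s + 1 < t"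
    using m by force+
  then show ?thesis
    using st by simp
qed

lemma chain_covers:
  fixes a b :: "nat \<Rightarrow> nat"
  assumes k: "1 \<le> k" and first: "a 1 = 0"
    and step: "\<And>j. 1 \<le> j \<Longrightarrow> j + 1 \<le> k \<Longrightarrow> a (j + 1) = a j + b j"
    and last: "a k + b k = N" and m: "m \<le> N"
  obtains j where "j \<in> {1..k}" "a j \<le> m" "m \<le> a j + b j"
proof -
  define J where "J = {t \<in> {1..k}. a t \<le> m}"
  have J: "finite J" "1 \<in> J"
    using k first by (auto simp: J_def)
  then have "Max J \<in> J"
    by (intro Max_in) auto
  then have j: "Max J \<in> {1..k}" "a (Max J) \<le> m"
    by (auto simp: J_def)
  have "m \<le> a (Max J) + b (Max J)"
  proof (cases "Max J = k")
    case False
    then have "Max J + 1 \<le> k"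
      using j by auto
    moreover have "Max J + 1 \<notin> J"
      using Max_ge[OF J(1), of "Max J + 1"] by auto
    ultimately show ?thesis
      using j step[of "Max J"] by (auto simp: J_def)
  qed (use last m in auto)
  with j that show ?thesis
    by blast
qed

lemma chain_intervals:
  fixes a b :: "nat \<Rightarrow> nat"
  assumes k: "1 \<le> k" and first: "a 1 = 0"
    and step: "\<And>j. 1 \<le> j \<Longrightarrow> j + 1 \<le> k \<Longrightarrow> a (j + 1) = a j + b j"
    and last: "a k + b k = N" and pos: "\<And>j. j \<in> {1..k} \<Longrightarrow> 0 < b j" and m: "m \<le> N"
  obtains (single) j where "j \<in> {1..k}" "{t \<in> {1..k}. a t \<le> m \<and> m \<le> a t + b t} = {j}"
    | (pair) j where "1 \<le> j" "j + 1 \<le> k" "m = a (j + 1)"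
      "{t \<in> {1..k}. a t \<le> m \<and> m \<le> a t + b t} = {j, j + 1}"
proof -
  define I where "I = {t \<in> {1..k}. a t \<le> m \<and> m \<le> a t + b t}"
  have adjacent: "t = s + 1 \<and> m = a t" if "s \<in> I" "t \<in> I" "s < t" for s t
    using that chain_overlap[of k a b s t m, OF step pos] by (auto simp: I_def)
  obtain j where "j \<in> I"
    using chain_covers[OF k first step last m] by (auto simp: I_def)
  show ?thesis
  proof (cases "I = {j}")
    case True
    have "j \<in> {1..k}"
      using \<open>j \<in> I\<close> by (simp add: I_def)
    with True show ?thesis
      using single unfolding I_def by blast
  next
    case False
    then obtain t where t: "t \<in> I" "t \<noteq> j"
      using \<open>j \<in> I\<close> by blast
    define s where "s = min j t"
    have s: "s \<in> I" "s + 1 \<in> I" "m = a (s + 1)"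
      using adjacent[OF \<open>j \<in> I\<close> t(1)] adjacent[OF t(1) \<open>j \<in> I\<close>] \<open>j \<in> I\<close> t
      by (auto simp: s_def min_def not_le order.order_iff_strict)
    have "I \<subseteq> {s, s + 1}"
    proof
      fix u assume u: "u \<in> I"
      consider "u < s" | "u = s" | "s < u"
        by linarith
      then show "u \<in> {s, s + 1}"
      proof cases
        case 1
        then show ?thesis
          using adjacent[OF u s(1)] adjacent[OF u s(2)] by simp
      next
        case 3
        then show ?thesis
          using adjacent[OF s(1) u] by simp
      qed simp
    qed
    with s have "I = {s, s + 1}"
      by blast
    moreover have "1 \<le> s" "s + 1 \<le> k"
      using s(1,2) by (auto simp: I_def)
    ultimately show ?thesis
      using pair[of s] s(3) unfolding I_def by blast
  qed
qed

lemma hinge_nonzero_cases: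
  fixes Ps :: "nat \<Rightarrow> ('n::finite + 'n \<Rightarrow> complex) set"
  assumes hinge: "hinge Ps k" and m: "m \<le> CARD('n)" and lambda: "\<forall>j\<in>{1..k}. lambda_m m (Ps j) (L j)"
  obtains (single) j where "{t \<in> {1..k}. op_nonzero m (L t)} = {j}"
    | (pair) j where "1 \<le> j" "j + 1 \<le> k" "{t \<in> {1..k}. op_nonzero m (L t)} = {j, j + 1}"
      "op_rank m (L j) = 1" "op_rank m (L (j + 1)) = 1" "op_propto m (L j) (L (j + 1))"
      "\<forall>LQ. lambda_m m (KerIm (Ps j)) LQ \<longrightarrow> op_propto m (L j) LQ"
proof -
  define a where "a j = cdim (Indef (Ps j))" for j
  define b where "b j = rk (Ps j)" for j
  have "\<forall>j\<in>{1..k}. \<exists>e E. lambda_form (Ps j) e E (a j) (b j) m (L j)"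
    using lambda lambda_m_imp_lambda_form unfolding a_def b_def by metis
  then obtain e E where forms: "\<And>j. j \<in> {1..k} \<Longrightarrow> lambda_form (Ps j) (e j) (E j) (a j) (b j) m (L j)"
    by metis
  then have nonzero: "{t \<in> {1..k}. op_nonzero m (L t)} = {t \<in> {1..k}. a t \<le> m \<and> m \<le> a t + b t}"
    using lambda_form.op_nonzero_iff[OF _ m] by blast
  have "\<exists>e E a b. normal_form (Ps j) e E a b" if "j \<in> {1..k}" for j
    using forms[OF that] by (auto simp: lambda_form_def)
  note dims = hinge_dims[OF hinge this, folded a_def b_def]
  have k: "1 \<le> k" "\<And>j. j \<in> {1..k} \<Longrightarrow> 0 < b j"
    and adj: "\<And>j. 1 \<le> j \<Longrightarrow> j + 1 \<le> k \<Longrightarrow>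
      Ker (Ps j) = Dom (Ps (j + 1)) \<and> Im (Ps j) = Indef (Ps (j + 1))"
    using hinge by (auto simp: hinge_def b_def)
  show ?thesis
  proof (rule chain_intervals[OF k(1) dims(1) dims(2) dims(3) k(2) m])
    fix j assume "{t \<in> {1..k}. a t \<le> m \<and> m \<le> a t + b t} = {j}"
    then show ?thesis
      using single nonzero by simp
  next
    fix j assume j: "1 \<le> j" "j + 1 \<le> k" "m = a (j + 1)"
      and "{t \<in> {1..k}. a t \<le> m \<and> m \<le> a t + b t} = {j, j + 1}"
    then have "{t \<in> {1..k}. op_nonzero m (L t)} = {j, j + 1}" "m = a j + b j"
      using nonzero dims(2) by simp_all
    moreover have "j \<in> {1..k}" "j + 1 \<in> {1..k}"
      using j by auto
    ultimately show ?thesis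
      using adjacent_rank_one_propto[OF forms[of j] forms[of "j + 1"] m \<open>m = a j + b j\<close>]
        adj[OF j(1,2)] by (intro pair[OF j(1,2)]) simp_all
  qed
qed

theorem theorem2p4:
  fixes Ps :: "nat \<Rightarrow> ('n::finite + 'n \<Rightarrow> complex) set"
    and k m :: nat
    and L :: "nat \<Rightarrow> ('n list \<Rightarrow> complex) \<Rightarrow> ('n list \<Rightarrow> complex)"
  assumes "hinge Ps k"
    and "m \<le> CARD('n)"
    and "\<forall>j\<in>{1..k}. lambda_m m (Ps j) (L j)"
  shows "let A = (\<exists>!j. j \<in> {1..k} \<and> op_nonzero m (L j));
             B = (\<exists>j. 1 \<le> j \<and> j + 1 \<le> k \<and> op_nonzero m (L j) \<and> op_nonzero m (L (j + 1)) \<and>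
                    (\<forall>t\<in>{1..k} - {j, j + 1}. \<not> op_nonzero m (L t)) \<and>
                    op_rank m (L j) = 1 \<and> op_rank m (L (j + 1)) = 1 \<and>
                    op_propto m (L j) (L (j + 1)) \<and>
                    (\<forall>LQ. lambda_m m (KerIm (Ps j)) LQ \<longrightarrow> op_propto m (L j) LQ))
         in (A \<and> \<not> B) \<or> (\<not> A \<and> B)"
  using assms(1-3)
proof (cases rule: hinge_nonzero_cases)
  case (single j)
  then have Z: "t \<in> {1..k} \<and> op_nonzero m (L t) \<longleftrightarrow> t = j" for t
    by blast
  then have "\<not> (op_nonzero m (L t) \<and> op_nonzero m (L (t + 1)))" if "1 \<le> t" "t + 1 \<le> k" for t
    using that Z[of t] Z[of "t + 1"] by auto
  moreover have "\<exists>!t. t \<in> {1..k} \<and> op_nonzero m (L t)"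
    by (intro ex1I[of _ j]) (simp_all only: Z)
  ultimately show ?thesis
    unfolding Let_def by blast
next
  case (pair j)
  then have Z: "t \<in> {1..k} \<and> op_nonzero m (L t) \<longleftrightarrow> t = j \<or> t = j + 1" for t
    by blast
  then have "\<not> (\<exists>!t. t \<in> {1..k} \<and> op_nonzero m (L t))"
    by (metis Suc_eq_plus1 n_not_Suc_n)
  moreover have "\<forall>t\<in>{1..k} - {j, j + 1}. \<not> op_nonzero m (L t)"
    using Z by blast
  ultimately show ?thesis
    unfolding Let_def using pair Z by (intro disjI2 conjI exI[of _ j]) auto
qed

end
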